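(* Let $K\ge1$, $T\ge1$, $\ell_1,\dots,\ell_T\in[0,1]^K$, $\phi>1$, $\alpha>0$, and suppose the cumulative loss of FlipFlop with parameters $\phi,\alpha$ satisfies $H^{\mathrm{ff}}_T\ge L^*_T$. Then \[ \underline{V}_T\le\frac{L^*_T(T-L^*_T)}{T}+\Big(\frac{\phi}{\phi-1}+\frac{\phi}{\alpha}+2\Big)\underline{\Delta}_T+\frac{\phi}{\alpha}. \]
   Context: Hedge setting: $K$ experts; in round $t$ the learner chooses a probability vector $w_t$, then $\ell_t$ is revealed and the learner suffers $h_t=\sum_kw_{t,k}\ell_{t,k}$. Write $L_{t,k}=\sum_{s=1}^t\ell_{s,k}$ ($L_{0,k}=0$), $L^*_t=\min_kL_{t,k}$, $H_T=\sum_{t\le T}h_t$. Exponential weights with learning rate $\eta\in(0,\infty]$ at time $t$: $w_{t,k}=e^{-\eta L_{t-1,k}}/\sum_je^{-\eta L_{t-1,j}}$ if $\eta<\infty$; for $\eta=\infty$, $w_t$ uniform on $\{k:L_{t-1,k}=L^*_{t-1}\}$. With learning rate $\eta_t$ in round $t$: mix loss $m_t=-\frac1{\eta_t}\ln\sum_kw_{t,k}e^{-\eta_t\ell_{t,k}}$ if $\eta_t<\infty$, $m_t=L^*_t-L^*_{t-1}$ if $\eta_t=\infty$; mixability gap $\delta_t=h_t-m_t$; loss variance $v_t=\sum_kw_{t,k}(\ell_{t,k}-h_t)^2$. FlipFlop with parameters $\phi>1,\alpha>0$: keeps accumulators $\overline{\Delta}$ (flip) and $\underline{\Delta}$ (flop),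 both initially $0$, starting in the flip regime. In round $t$: flip regime uses $\eta_t=\infty$; flop regime uses $\eta_t=\ln K/\underline{\Delta}_{t-1}$ ($=\infty$ if $\underline{\Delta}_{t-1}=0$); weights are exponential weights with learning rate $\eta_t$ from $L_{t-1}$. After round $t$, $\delta_t$ is added to the current regime's accumulator. If in flip and $\overline{\Delta}_t>(\phi/\alpha)\underline{\Delta}_t$, switch to flop for round $t+1$; if in flop and $\underline{\Delta}_t>\alpha\overline{\Delta}_t$, switch to flip for round $t+1$. $H^{\mathrm{ff}}_T$ is FlipFlop's cumulative loss, $\underline{\Delta}_T$ the sum of $\delta_t$ over flop rounds $t\le T$, and $\underline{V}_T$ the sum of $v_t$ over flop rounds $t\le T$. *)

theory Defs
  imports Complex_Main "HOL-Library.Extended_Real"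
begin

text \<open>Experts are indexed by k < K, rounds by t = 1..T; loss of expert k in round t is l t k.
  Learning rates are extended reals; PInfty stands for the learning rate infinity.\<close>

definition cumL :: "(nat \<Rightarrow> nat \<Rightarrow> real) \<Rightarrow> nat \<Rightarrow> nat \<Rightarrow> real" where
  "cumL l t k = (\<Sum>s\<in>{1..t}. l s k)"

definition Lstar :: "(nat \<Rightarrow> nat \<Rightarrow> real) \<Rightarrow> nat \<Rightarrow> nat \<Rightarrow> real" where
  "Lstar l K t = Min ((\<lambda>k. cumL l t k) ` {..<K})"

definition ew :: "nat \<Rightarrow> ereal \<Rightarrow> (nat \<Rightarrow> real) \<Rightarrow> nat \<Rightarrow> real" where
  "ew K eta L k =
     (if eta = PInfty then
        (if L k = Min (L ` {..<K}) then 1 / real (card {j\<in>{..<K}. L j = Min (L ` {..<K})}) else 0)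
      else exp (- real_of_ereal eta * L k) / (\<Sum>j<K. exp (- real_of_ereal eta * L j)))"

definition wt :: "(nat \<Rightarrow> nat \<Rightarrow> real) \<Rightarrow> nat \<Rightarrow> ereal \<Rightarrow> nat \<Rightarrow> nat \<Rightarrow> real" where
  "wt l K eta t k = ew K eta (cumL l (t - 1)) k"

definition hedge_loss :: "(nat \<Rightarrow> nat \<Rightarrow> real) \<Rightarrow> nat \<Rightarrow> ereal \<Rightarrow> nat \<Rightarrow> real" where
  "hedge_loss l K eta t = (\<Sum>k<K. wt l K eta t k * l t k)"

definition mix_loss :: "(nat \<Rightarrow> nat \<Rightarrow> real) \<Rightarrow> nat \<Rightarrow> ereal \<Rightarrow> nat \<Rightarrow> real" where
  "mix_loss l K eta t =
     (if eta = PInfty then Lstar l K t - Lstar l K (t - 1)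
      else - (1 / real_of_ereal eta) * ln (\<Sum>k<K. wt l K eta t k * exp (- real_of_ereal eta * l t k)))"

definition mix_gap :: "(nat \<Rightarrow> nat \<Rightarrow> real) \<Rightarrow> nat \<Rightarrow> ereal \<Rightarrow> nat \<Rightarrow> real" where
  "mix_gap l K eta t = hedge_loss l K eta t - mix_loss l K eta t"

definition loss_var :: "(nat \<Rightarrow> nat \<Rightarrow> real) \<Rightarrow> nat \<Rightarrow> ereal \<Rightarrow> nat \<Rightarrow> real" where
  "loss_var l K eta t = (\<Sum>k<K. wt l K eta t k * (l t k - hedge_loss l K eta t)\<^sup>2)"

text \<open>Learning rate of FlipFlop given its state (in_flop, Delta_flip, Delta_flop) before the round.\<close>
definition ff_rate :: "nat \<Rightarrow> bool \<times> real \<times> real \<Rightarrow> ereal" where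
  "ff_rate K st = (case st of (flop, dF, dL) \<Rightarrow>
       (if flop \<and> dL \<noteq> 0 then ereal (ln (real K) / dL) else PInfty))"

text \<open>State after round t: (regime for round t+1 is flop?, flip accumulator, flop accumulator).\<close>
primrec ff_state :: "(nat \<Rightarrow> nat \<Rightarrow> real) \<Rightarrow> nat \<Rightarrow> real \<Rightarrow> real \<Rightarrow> nat \<Rightarrow> bool \<times> real \<times> real" where
  "ff_state l K phi alpha 0 = (False, 0, 0)"
| "ff_state l K phi alpha (Suc t) =
     (case ff_state l K phi alpha t of (flop, dF, dL) \<Rightarrow>
        (let eta = ff_rate K (flop, dF, dL);
             d = mix_gap l K eta (Suc t);
             dF' = (if flop then dF else dF + d);
             dL' = (if flop then dL + d else dL);
             flop' = (if flop then \<not> (dL' > alpha * dF') else dF' > (phi / alpha) * dL')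
         in (flop', dF', dL')))"

definition ff_in_flop :: "(nat \<Rightarrow> nat \<Rightarrow> real) \<Rightarrow> nat \<Rightarrow> real \<Rightarrow> real \<Rightarrow> nat \<Rightarrow> bool" where
  "ff_in_flop l K phi alpha t = fst (ff_state l K phi alpha (t - 1))"

definition ff_eta :: "(nat \<Rightarrow> nat \<Rightarrow> real) \<Rightarrow> nat \<Rightarrow> real \<Rightarrow> real \<Rightarrow> nat \<Rightarrow> ereal" where
  "ff_eta l K phi alpha t = ff_rate K (ff_state l K phi alpha (t - 1))"

definition ff_loss :: "(nat \<Rightarrow> nat \<Rightarrow> real) \<Rightarrow> nat \<Rightarrow> real \<Rightarrow> real \<Rightarrow> nat \<Rightarrow> real" where
  "ff_loss l K phi alpha T = (\<Sum>t\<in>{1..T}. hedge_loss l K (ff_eta l K phi alpha t) t)"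

definition ff_Dflop :: "(nat \<Rightarrow> nat \<Rightarrow> real) \<Rightarrow> nat \<Rightarrow> real \<Rightarrow> real \<Rightarrow> nat \<Rightarrow> real" where
  "ff_Dflop l K phi alpha T =
     (\<Sum>t\<in>{t\<in>{1..T}. ff_in_flop l K phi alpha t}. mix_gap l K (ff_eta l K phi alpha t) t)"

definition ff_Vflop :: "(nat \<Rightarrow> nat \<Rightarrow> real) \<Rightarrow> nat \<Rightarrow> real \<Rightarrow> real \<Rightarrow> nat \<Rightarrow> real" where
  "ff_Vflop l K phi alpha T =
     (\<Sum>t\<in>{t\<in>{1..T}. ff_in_flop l K phi alpha t}. loss_var l K (ff_eta l K phi alpha t) t)"

end

theory Submission
  imports Defs "HOL-Analysis.Convex"
begin

text \<open>
  The regret \<open>H - L*\<close> of FlipFlop is the sum of all mixability gaps plus the excess of the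
  flop-round mix losses over the increments of \<open>L*\<close>. Within a flop regime these mix losses
  telescope into the mix regret of exponential weights, which is at most \<open>ln K / \<eta> = \<Delta>\<close> (the
  flop accumulator) and only grows as the learning rate decreases; together with the switching
  rules this keeps the excess below \<open>(\<phi>/(\<phi>-1) + 1) \<Delta>\<close> and the flip gaps before the last flip
  round \<open>t\<^sub>0\<close> below \<open>(\<phi>/\<alpha>) \<Delta>\<close>, so \<open>H - L* - \<delta>(t\<^sub>0) \<le> C \<Delta>\<close>. On the other hand each flop
  variance is at most \<open>h (1 - h)\<close> for the Hedge loss \<open>h \<in> [0,1]\<close>, and by Cauchy-Schwarz the sum
  of \<open>h (1 - h)\<close> over the \<open>T - 1\<close> rounds other than \<open>t\<^sub>0\<close> is at most \<open>L* (T - L*) / T\<close> plus the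
  positive part of \<open>H - L* - \<delta>(t\<^sub>0)\<close>.
\<close>

lemma sum_filter_atLeastAtMost_Suc:
  "(\<Sum>s\<in>{s\<in>{1..Suc t}. P s}. f s)
    = (\<Sum>s\<in>{s\<in>{1..t}. P s}. f s) + (if P (Suc t) then f (Suc t) else 0)"
proof -
  have "{s\<in>{1..Suc t}. P s} = {s\<in>{1..t}. P s} \<union> (if P (Suc t) then {Suc t} else {})"
    by (auto simp: le_Suc_eq)
  then show ?thesis by (simp add: sum.union_disjoint)
qed

lemma sum_filter_split:
  "finite A \<Longrightarrow> sum f A = (\<Sum>s\<in>{s\<in>A. \<not> P s}. f s) + (\<Sum>s\<in>{s\<in>A. P s}. f s)"
  by (simp add: sum.inter_filter flip: sum.distrib) (simp add: if_distrib cong: if_cong)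

section \<open>The best expert\<close>

lemma cumL_0 [simp]: "cumL l 0 k = 0"
  by (simp add: cumL_def)

lemma cumL_Suc: "cumL l (Suc t) k = cumL l t k + l (Suc t) k"
  by (simp add: cumL_def)

lemma Lstar_le_cumL: "k < K \<Longrightarrow> Lstar l K t \<le> cumL l t k"
  unfolding Lstar_def by (rule Min_le) auto

lemma Lstar_attained:
  assumes "K \<ge> 1"
  obtains k where "k < K" "Lstar l K t = cumL l t k"
proof -
  have "Lstar l K t \<in> (\<lambda>k. cumL l t k) ` {..<K}"
    unfolding Lstar_def using assms by (intro Min_in) (auto simp: lessThan_empty_iff)
  then show ?thesis using that by auto
qed

lemma Lstar_0: "K \<ge> 1 \<Longrightarrow> Lstar l K 0 = 0"
  by (metis Lstar_attained cumL_0)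

lemma Lstar_Suc_bounds:
  assumes "K \<ge> 1" and "\<And>k. k < K \<Longrightarrow> 0 \<le> l (Suc t) k \<and> l (Suc t) k \<le> 1"
  shows "Lstar l K t \<le> Lstar l K (Suc t)" and "Lstar l K (Suc t) \<le> Lstar l K t + 1"
proof -
  obtain k where k: "k < K" "Lstar l K (Suc t) = cumL l (Suc t) k"
    using Lstar_attained[OF assms(1)] .
  with assms(2)[of k] Lstar_le_cumL[of k K l t] show "Lstar l K t \<le> Lstar l K (Suc t)"
    by (simp add: cumL_Suc)
  obtain j where "j < K" "Lstar l K t = cumL l t j"
    using Lstar_attained[OF assms(1)] .
  with assms(2)[of j] Lstar_le_cumL[of j K l "Suc t"] show "Lstar l K (Suc t) \<le> Lstar l K t + 1"
    by (simp add: cumL_Suc)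
qed

lemma Lstar_mono:
  assumes "K \<ge> 1" and "\<And>t k. t \<in> {1..T} \<Longrightarrow> k < K \<Longrightarrow> 0 \<le> l t k \<and> l t k \<le> 1"
    and "t \<le> t'" "t' \<le> T"
  shows "Lstar l K t \<le> Lstar l K t'"
  using assms(3,4)
proof (induction t' rule: dec_induct)
  case (step t')
  then have "Lstar l K t' \<le> Lstar l K (Suc t')"
    using assms(2) by (intro Lstar_Suc_bounds(1)[OF assms(1)]) auto
  with step show ?case by simp
qed simp

lemma Lstar_le_of_nat:
  assumes "K \<ge> 1" and "\<And>t k. t \<in> {1..T} \<Longrightarrow> k < K \<Longrightarrow> 0 \<le> l t k \<and> l t k \<le> 1"
    and "t \<le> T"
  shows "Lstar l K t \<le> real t"
  using assms(3)
proof (induction t)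
  case (Suc t)
  then have "Lstar l K (Suc t) \<le> Lstar l K t + 1"
    using assms(2) by (intro Lstar_Suc_bounds(2)[OF assms(1)]) auto
  with Suc show ?case by simp
qed (simp add: Lstar_0[OF assms(1)])

lemma sum_Lstar_increments: "(\<Sum>s\<in>{1..t}. Lstar l K s - Lstar l K (s - 1)) = Lstar l K t - Lstar l K 0"
proof (induction t)
  case (Suc t)
  have "{1..Suc t} = insert (Suc t) {1..t}" by auto
  with Suc show ?case by simp
qed simp

section \<open>Hedge losses and mixability gaps\<close>

lemma ew_nonneg: "ew K eta L k \<ge> 0"
  unfolding ew_def by (auto intro!: divide_nonneg_nonneg sum_nonneg)

lemma sum_ew: assumes "K \<ge> 1" shows "(\<Sum>k<K. ew K eta L k) = 1"
proof (cases "eta = PInfty")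
  case True
  define A where "A = {j\<in>{..<K}. L j = Min (L ` {..<K})}"
  have "Min (L ` {..<K}) \<in> L ` {..<K}" using assms by (intro Min_in) (auto simp: lessThan_empty_iff)
  then have "card A > 0" unfolding A_def by (auto simp: card_gt_0_iff)
  have "(\<Sum>k<K. ew K eta L k) = (\<Sum>k\<in>A. 1 / real (card A))"
    using True by (simp add: ew_def sum.If_cases A_def Int_def)
  also have "\<dots> = 1" using \<open>card A > 0\<close> by simp
  finally show ?thesis .
next
  case False
  have "(\<Sum>j<K. exp (- real_of_ereal eta * L j)) > 0"
    using assms by (intro sum_pos) (auto simp: lessThan_empty_iff)
  with False show ?thesis by (simp add: ew_def flip: sum_divide_distrib)
qed

lemma wt_nonneg: "wt l K eta t k \<ge> 0"
  by (simp add: wt_def ew_nonneg)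

lemma sum_wt: "K \<ge> 1 \<Longrightarrow> (\<Sum>k<K. wt l K eta t k) = 1"
  by (simp add: wt_def sum_ew)

lemma weighted_variance_le:
  fixes w x :: "'a \<Rightarrow> real"
  assumes "\<And>k. k \<in> A \<Longrightarrow> 0 \<le> w k" "sum w A = 1" "\<And>k. k \<in> A \<Longrightarrow> 0 \<le> x k \<and> x k \<le> 1"
  shows "(\<Sum>k\<in>A. w k * (x k - (\<Sum>j\<in>A. w j * x j))\<^sup>2)
    \<le> (\<Sum>k\<in>A. w k * x k) * (1 - (\<Sum>k\<in>A. w k * x k))"
proof -
  define m where "m = (\<Sum>j\<in>A. w j * x j)"
  have "(\<Sum>k\<in>A. w k * (x k - m)\<^sup>2) = (\<Sum>k\<in>A. w k * (x k)\<^sup>2) - 2 * m * m + m\<^sup>2 * sum w A"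
    by (simp add: m_def power2_diff algebra_simps sum.distrib sum_subtractf sum_distrib_left
        sum_distrib_right)
  also have "(\<Sum>k\<in>A. w k * (x k)\<^sup>2) \<le> m"
    unfolding m_def using assms
    by (intro sum_mono mult_left_mono) (auto simp: power2_eq_square intro: mult_left_le)
  finally show ?thesis using assms(2) by (simp add: m_def power2_eq_square algebra_simps)
qed

lemma hedge_loss_bounds:
  assumes "K \<ge> 1" and "\<And>k. k < K \<Longrightarrow> 0 \<le> l t k \<and> l t k \<le> 1"
  shows "0 \<le> hedge_loss l K eta t" and "hedge_loss l K eta t \<le> 1"
    and "loss_var l K eta t \<le> hedge_loss l K eta t * (1 - hedge_loss l K eta t)"
proof -
  show "0 \<le> hedge_loss l K eta t"
    unfolding hedge_loss_def using assms(2) wt_nonneg by (intro sum_nonneg) auto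
  have "hedge_loss l K eta t \<le> (\<Sum>k<K. wt l K eta t k)"
    unfolding hedge_loss_def using assms(2) wt_nonneg by (intro sum_mono mult_left_le) auto
  then show "hedge_loss l K eta t \<le> 1" using sum_wt[OF assms(1)] by simp
  show "loss_var l K eta t \<le> hedge_loss l K eta t * (1 - hedge_loss l K eta t)"
    unfolding loss_var_def hedge_loss_def
    using assms wt_nonneg sum_wt by (intro weighted_variance_le) auto
qed

lemma mix_gap_nonneg:
  assumes "K \<ge> 1" "t \<ge> 1" "eta > 0"
  shows "mix_gap l K eta t \<ge> 0"
proof (cases "eta = PInfty")
  case True
  obtain s where s: "t = Suc s" using assms(2) by (cases t) auto
  define y where "y = Lstar l K t - Lstar l K s"
  have "0 \<le> (\<Sum>k<K. wt l K PInfty t k * (l t k - y))"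
  proof (intro sum_nonneg)
    fix k assume k: "k \<in> {..<K}"
    show "0 \<le> wt l K PInfty t k * (l t k - y)"
    proof (cases "cumL l s k = Lstar l K s")
      case True
      with Lstar_le_cumL[of k K l t] k have "y \<le> l t k" by (simp add: y_def s cumL_Suc)
      then show ?thesis using wt_nonneg by simp
    next
      case False
      then show ?thesis by (simp add: wt_def ew_def s Lstar_def)
    qed
  qed
  also have "\<dots> = hedge_loss l K PInfty t - y"
    using sum_wt[OF assms(1), of l PInfty t]
    by (simp add: hedge_loss_def algebra_simps sum_subtractf flip: sum_distrib_left)
  finally show ?thesis using True by (simp add: mix_gap_def mix_loss_def y_def s)
next
  case False
  then obtain r where r: "eta = ereal r" "r > 0" using assms(3) by (cases eta) auto
  let ?w = "wt l K eta t"
  have "exp (\<Sum>k<K. ?w k *\<^sub>R (- r * l t k)) \<le> (\<Sum>k<K. ?w k * exp (- r * l t k))"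
    using assms(1) wt_nonneg sum_wt
    by (intro convex_on_sum[OF _ _ exp_convex]) (auto simp: lessThan_empty_iff)
  also have "(\<Sum>k<K. ?w k *\<^sub>R (- r * l t k)) = - r * hedge_loss l K eta t"
    by (simp add: hedge_loss_def sum_distrib_left algebra_simps)
  finally have "- r * hedge_loss l K eta t \<le> ln (\<Sum>k<K. ?w k * exp (- r * l t k))"
    using exp_le_cancel_iff ln_ge_iff by (metis exp_gt_zero less_le_trans)
  with r show ?thesis by (simp add: mix_gap_def mix_loss_def field_simps)
qed

section \<open>Mix regret of exponential weights\<close>

lemma ln_mean_exp_scale_le:
  fixes u :: "'a \<Rightarrow> real"
  assumes "finite A" "A \<noteq> {}" "0 \<le> p" "p \<le> 1"
  shows "ln ((\<Sum>k\<in>A. exp (p * u k)) / card A) \<le> p * ln ((\<Sum>k\<in>A. exp (u k)) / card A)"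
proof -
  define c where "c = ln ((\<Sum>k\<in>A. exp (u k)) / card A)"
  have pos: "(\<Sum>k\<in>A. exp (u k)) > 0" "card A > 0"
    using assms by (auto intro!: sum_pos simp: card_gt_0_iff)
  then have sum_eq: "(\<Sum>k\<in>A. exp (u k)) = card A * exp c"
    by (simp add: c_def)
  have term_le: "exp (p * u k) \<le> exp (p * c) * (p * exp (u k - c) + (1 - p))" for k
  proof -
    have "exp (p * (u k - c)) \<le> p * exp (u k - c) + (1 - p)"
      using convex_onD[OF exp_convex, of p 0 "u k - c"] assms(3,4) by (simp add: algebra_simps)
    then have "exp (p * c) * exp (p * (u k - c)) \<le> exp (p * c) * (p * exp (u k - c) + (1 - p))"
      by (rule mult_left_mono) simp
    then show ?thesis
      by (simp add: algebra_simps flip: exp_add)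
  qed
  have "(\<Sum>k\<in>A. exp (p * u k)) \<le> (\<Sum>k\<in>A. exp (p * c) * (p * exp (u k - c) + (1 - p)))"
    using term_le by (rule sum_mono)
  also have "\<dots> = (\<Sum>k\<in>A. exp (p * c) * p / exp c * exp (u k) + exp (p * c) * (1 - p))"
    by (intro sum.cong) (auto simp: exp_diff field_simps)
  also have "\<dots> = exp (p * c) * p / exp c * (\<Sum>k\<in>A. exp (u k)) + card A * (exp (p * c) * (1 - p))"
    by (simp only: sum.distrib sum_distrib_left sum_constant)
  also have "\<dots> = card A * exp (p * c)"
    by (simp add: sum_eq algebra_simps)
  finally have "(\<Sum>k\<in>A. exp (p * u k)) / card A \<le> exp (p * c)"
    using pos by (simp add: divide_le_eq mult.commute)
  moreover have "(\<Sum>k\<in>A. exp (p * u k)) / card A > 0"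
    using assms pos by (auto intro!: sum_pos divide_pos_pos)
  ultimately show ?thesis
    by (metis c_def ln_exp ln_le_cancel_iff exp_gt_zero)
qed

definition cum_mix_loss :: "(nat \<Rightarrow> nat \<Rightarrow> real) \<Rightarrow> nat \<Rightarrow> nat \<Rightarrow> real \<Rightarrow> real" where
  "cum_mix_loss l K t r = - ln ((\<Sum>k<K. exp (- r * cumL l t k)) / K) / r"

definition mix_regret :: "(nat \<Rightarrow> nat \<Rightarrow> real) \<Rightarrow> nat \<Rightarrow> nat \<Rightarrow> real \<Rightarrow> real" where
  "mix_regret l K t r = cum_mix_loss l K t r - Lstar l K t"

lemma sum_exp_cumL_pos: "K \<ge> 1 \<Longrightarrow> (\<Sum>k<K. exp (- r * cumL l t k)) > 0"
  by (intro sum_pos) (auto simp: lessThan_empty_iff)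

lemma mix_loss_ereal:
  assumes "K \<ge> 1" "t \<ge> 1"
  shows "mix_loss l K (ereal r) t = cum_mix_loss l K t r - cum_mix_loss l K (t - 1) r"
proof -
  obtain s where s: "t = Suc s" using assms(2) by (cases t) auto
  let ?Z = "\<lambda>t. \<Sum>k<K. exp (- r * cumL l t k)"
  have "(\<Sum>k<K. wt l K (ereal r) t k * exp (- r * l t k)) = (\<Sum>k<K. exp (- r * cumL l t k) / ?Z s)"
    unfolding wt_def ew_def s
    by (intro sum.cong) (auto simp: cumL_Suc ring_distribs exp_diff exp_minus divide_inverse)
  then have "(\<Sum>k<K. wt l K (ereal r) t k * exp (- r * l t k)) = ?Z t / ?Z s"
    by (simp add: sum_divide_distrib)
  moreover have "ln (?Z t / ?Z s) = ln (?Z t / K) - ln (?Z s / K)"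
    using sum_exp_cumL_pos[OF assms(1), of r l t] sum_exp_cumL_pos[OF assms(1), of r l s] assms(1)
    by (simp add: ln_div)
  ultimately show ?thesis
    by (simp add: mix_loss_def cum_mix_loss_def s diff_divide_distrib)
qed

lemma mix_regret_nonneg:
  assumes "K \<ge> 1" "r > 0"
  shows "mix_regret l K t r \<ge> 0"
proof -
  have "(\<Sum>k<K. exp (- r * cumL l t k)) \<le> card {..<K} * exp (- r * Lstar l K t)"
    using assms Lstar_le_cumL[of _ K l t] by (intro sum_bounded_above) auto
  then have "(\<Sum>k<K. exp (- r * cumL l t k)) / K \<le> exp (- r * Lstar l K t)"
    using assms(1) by (simp add: divide_le_eq mult.commute)
  then have "ln ((\<Sum>k<K. exp (- r * cumL l t k)) / K) \<le> - r * Lstar l K t"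
    using sum_exp_cumL_pos[OF assms(1), of r l t] assms(1)
      ln_le_cancel_iff[of "(\<Sum>k<K. exp (- r * cumL l t k)) / K" "exp (- r * Lstar l K t)"]
    by simp
  with assms show ?thesis
    by (simp add: mix_regret_def cum_mix_loss_def field_simps)
qed

lemma mix_regret_le:
  assumes "K \<ge> 1" "r > 0"
  shows "mix_regret l K t r \<le> ln K / r"
proof -
  obtain k where k: "k < K" "Lstar l K t = cumL l t k" using Lstar_attained[OF assms(1)] .
  have "exp (- r * Lstar l K t) \<le> (\<Sum>k<K. exp (- r * cumL l t k))"
    unfolding k(2) using k(1) by (intro member_le_sum) auto
  then have "- r * Lstar l K t \<le> ln (\<Sum>k<K. exp (- r * cumL l t k))"
    using sum_exp_cumL_pos[OF assms(1), of r l t] by (simp add: ln_ge_iff)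
  then have "- ln ((\<Sum>k<K. exp (- r * cumL l t k)) / K) \<le> ln K + r * Lstar l K t"
    using sum_exp_cumL_pos[OF assms(1), of r l t] assms(1) by (simp add: ln_div)
  then have "- ln ((\<Sum>k<K. exp (- r * cumL l t k)) / K) / r \<le> (ln K + r * Lstar l K t) / r"
    using assms(2) by (rule divide_right_mono[OF _ less_imp_le])
  with assms show ?thesis
    by (simp add: mix_regret_def cum_mix_loss_def add_divide_distrib)
qed

lemma mix_regret_antimono:
  assumes "K \<ge> 1" "0 < r'" "r' \<le> r"
  shows "mix_regret l K t r \<le> mix_regret l K t r'"
proof -
  have "ln ((\<Sum>k<K. exp (r' / r * (- r * cumL l t k))) / K)
      \<le> r' / r * ln ((\<Sum>k<K. exp (- r * cumL l t k)) / K)"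
    using assms by (intro ln_mean_exp_scale_le[of "{..<K}", simplified]) (auto simp: lessThan_empty_iff)
  with assms show ?thesis
    by (simp add: mix_regret_def cum_mix_loss_def field_simps)
qed

definition flop_mix_regret :: "(nat \<Rightarrow> nat \<Rightarrow> real) \<Rightarrow> nat \<Rightarrow> nat \<Rightarrow> real \<Rightarrow> real" where
  "flop_mix_regret l K t D = (if D = 0 then 0 else mix_regret l K t (ln K / D))"

lemma flop_mix_regret_bounds:
  assumes "K \<ge> 2" "0 \<le> D"
  shows "0 \<le> flop_mix_regret l K t D" and "flop_mix_regret l K t D \<le> D"
  using assms mix_regret_nonneg[of K "ln K / D" l t] mix_regret_le[of K "ln K / D" l t]
  by (auto simp: flop_mix_regret_def)

lemma ff_rate_flop: "ff_rate K (True, dF, D) = (if D = 0 then PInfty else ereal (ln K / D))"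
  by (simp add: ff_rate_def)

lemma mix_loss_flop_rate_le:
  assumes "K \<ge> 2" "0 \<le> D" "D \<le> D'"
  shows "mix_loss l K (ff_rate K (True, dF, D)) (Suc t) - (Lstar l K (Suc t) - Lstar l K t)
    \<le> flop_mix_regret l K (Suc t) D' - flop_mix_regret l K t D"
proof (cases "D = 0")
  case True
  then show ?thesis
    using flop_mix_regret_bounds(1)[of K D' l "Suc t"] assms
    by (simp add: ff_rate_flop mix_loss_def flop_mix_regret_def)
next
  case False
  define r where "r = ln K / D"
  have "r > 0" "0 < ln K / D'" "ln K / D' \<le> r"
    using assms False by (auto simp: r_def intro!: divide_left_mono)
  then have "mix_regret l K (Suc t) r \<le> mix_regret l K (Suc t) (ln K / D')"
    using assms(1) by (intro mix_regret_antimono) auto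
  with False assms show ?thesis
    using mix_loss_ereal[of K "Suc t" l r]
    by (simp add: ff_rate_flop flop_mix_regret_def mix_regret_def r_def)
qed

section \<open>The FlipFlop state\<close>

lemma ff_in_flop_Suc [simp]: "ff_in_flop l K phi alpha (Suc t) = fst (ff_state l K phi alpha t)"
  by (simp add: ff_in_flop_def)

lemma ff_eta_Suc [simp]: "ff_eta l K phi alpha (Suc t) = ff_rate K (ff_state l K phi alpha t)"
  by (simp add: ff_eta_def)

lemma ff_state_Suc:
  assumes "ff_state l K phi alpha t = (fl, dF, dL)"
  defines "d \<equiv> mix_gap l K (ff_rate K (fl, dF, dL)) (Suc t)"
  shows "ff_state l K phi alpha (Suc t) =
    (if fl then (\<not> dL + d > alpha * dF, dF, dL + d) else (dF + d > phi / alpha * dL, dF + d, dL))"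
  using assms by (simp add: Let_def)

lemma ff_state_accumulators:
  "snd (ff_state l K phi alpha t) =
    ((\<Sum>s\<in>{s\<in>{1..t}. \<not> ff_in_flop l K phi alpha s}. mix_gap l K (ff_eta l K phi alpha s) s),
     (\<Sum>s\<in>{s\<in>{1..t}. ff_in_flop l K phi alpha s}. mix_gap l K (ff_eta l K phi alpha s) s))"
proof (induction t)
  case (Suc t)
  obtain fl dF dL where st: "ff_state l K phi alpha t = (fl, dF, dL)"
    by (cases "ff_state l K phi alpha t")
  show ?case
    unfolding ff_state_Suc[OF st] sum_filter_atLeastAtMost_Suc ff_in_flop_Suc ff_eta_Suc st
    using Suc[unfolded st] by (cases fl) auto
qed simp

lemma ff_rate_pos: "K \<ge> 2 \<Longrightarrow> 0 \<le> dL \<Longrightarrow> 0 < ff_rate K (fl, dF, dL)"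
  by (simp add: ff_rate_def)

lemma ff_flop_acc_nonneg:
  assumes "K \<ge> 2"
  shows "0 \<le> snd (snd (ff_state l K phi alpha t))"
proof (induction t)
  case (Suc t)
  obtain fl dF dL where st: "ff_state l K phi alpha t = (fl, dF, dL)"
    by (cases "ff_state l K phi alpha t")
  with Suc have "0 \<le> dL" by simp
  then have "0 \<le> mix_gap l K (ff_rate K (fl, dF, dL)) (Suc t)"
    using assms by (intro mix_gap_nonneg ff_rate_pos) auto
  with \<open>0 \<le> dL\<close> show ?case unfolding ff_state_Suc[OF st] by (cases fl) simp_all
qed simp

lemma ff_eta_pos: "K \<ge> 2 \<Longrightarrow> 0 < ff_eta l K phi alpha t"
  using ff_flop_acc_nonneg[of K l phi alpha "t - 1"]
  by (cases "ff_state l K phi alpha (t - 1)") (simp add: ff_eta_def ff_rate_pos)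

lemma ff_mix_gap_nonneg: "K \<ge> 2 \<Longrightarrow> t \<ge> 1 \<Longrightarrow> 0 \<le> mix_gap l K (ff_eta l K phi alpha t) t"
  by (intro mix_gap_nonneg ff_eta_pos) auto

lemma ff_eta_flip: "\<not> ff_in_flop l K phi alpha t \<Longrightarrow> ff_eta l K phi alpha t = PInfty"
  by (cases "ff_state l K phi alpha (t - 1)") (simp add: ff_in_flop_def ff_eta_def ff_rate_def)

lemma ff_never_flop_single_expert: "\<not> ff_in_flop l 1 phi alpha t"
proof -
  have "ff_state l 1 phi alpha t = (False, 0, 0)" for t
  proof (induction t)
    case (Suc t)
    have "{j. j = 0 \<and> cumL l t j = cumL l t 0} = {0}" by auto
    then have "mix_gap l 1 PInfty (Suc t) = 0"
      by (simp add: mix_gap_def hedge_loss_def mix_loss_def wt_def ew_def Lstar_def cumL_Suc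
          lessThan_Suc)
    with Suc show ?case by (simp add: ff_state_Suc ff_rate_def)
  qed simp
  then show ?thesis by (simp add: ff_in_flop_def)
qed

lemma ff_last_flip_round:
  assumes "T \<ge> 1"
  obtains t0 where "t0 \<in> {1..T}" "\<not> ff_in_flop l K phi alpha t0"
    "\<forall>s\<in>{t0<..T}. ff_in_flop l K phi alpha s"
proof -
  let ?F = "{s\<in>{1..T}. \<not> ff_in_flop l K phi alpha s}"
  have "1 \<in> ?F" using assms by (simp add: ff_in_flop_def)
  then have max: "Max ?F \<in> ?F" by (intro Max_in) auto
  show ?thesis
  proof (rule that[of "Max ?F"])
    show "Max ?F \<in> {1..T}" "\<not> ff_in_flop l K phi alpha (Max ?F)" using max by auto
    show "\<forall>s\<in>{Max ?F<..T}. ff_in_flop l K phi alpha s"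
    proof
      fix s assume s: "s \<in> {Max ?F<..T}"
      show "ff_in_flop l K phi alpha s"
      proof (rule ccontr)
        assume "\<not> ff_in_flop l K phi alpha s"
        with s max have "s \<in> ?F" by auto
        then have "s \<le> Max ?F" by (intro Max_ge) auto
        with s show False by simp
      qed
    qed
  qed
qed

section \<open>The regret of FlipFlop\<close>

definition ff_flop_excess :: "(nat \<Rightarrow> nat \<Rightarrow> real) \<Rightarrow> nat \<Rightarrow> real \<Rightarrow> real \<Rightarrow> nat \<Rightarrow> real" where
  "ff_flop_excess l K phi alpha t = (\<Sum>s\<in>{s\<in>{1..t}. ff_in_flop l K phi alpha s}.
     mix_loss l K (ff_eta l K phi alpha s) s - (Lstar l K s - Lstar l K (s - 1)))"

lemma ff_flop_excess_Suc:
  assumes "ff_state l K phi alpha t = (fl, dF, dL)"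
  shows "ff_flop_excess l K phi alpha (Suc t) = ff_flop_excess l K phi alpha t
    + (if fl then mix_loss l K (ff_rate K (fl, dF, dL)) (Suc t) - (Lstar l K (Suc t) - Lstar l K t)
       else 0)"
  unfolding ff_flop_excess_def sum_filter_atLeastAtMost_Suc using assms by simp

text \<open>\<open>X\<close> plays the role of \<open>ff_flop_excess\<close> and \<open>G\<close> of the current \<open>flop_mix_regret\<close>.\<close>

definition ff_invariant :: "real \<Rightarrow> real \<Rightarrow> bool \<times> real \<times> real \<Rightarrow> real \<Rightarrow> real \<Rightarrow> bool" where
  "ff_invariant phi alpha st X G = (case st of (fl, dF, dL) \<Rightarrow>
     X - (if fl then G else 0) \<le> phi / (phi - 1) * dL \<and>
     (if fl then X - G \<le> alpha * dF / (phi - 1) else dF \<le> phi / alpha * dL))"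

lemma ff_invariant_flop_step:
  assumes inv: "ff_invariant phi alpha (True, dF, dL) X G"
    and "phi > 1" "alpha > 0" "0 \<le> dL" "0 \<le> d"
    and step: "X' - G' \<le> X - G" and G': "G' \<le> dL + d"
  shows "ff_invariant phi alpha (\<not> dL + d > alpha * dF, dF, dL + d) X' G'"
proof -
  have c: "0 < phi - 1" "0 \<le> phi / (phi - 1)" using assms(2) by auto
  have IH: "X - G \<le> phi / (phi - 1) * dL" "X - G \<le> alpha * dF / (phi - 1)"
    using inv by (simp_all add: ff_invariant_def)
  show ?thesis
  proof (cases "dL + d > alpha * dF")
    case False
    have "phi / (phi - 1) * dL \<le> phi / (phi - 1) * (dL + d)"
      using c assms(5) by (intro mult_left_mono) auto
    with False IH step show ?thesis by (simp add: ff_invariant_def)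
  next
    case True
    have "alpha * dF \<le> phi * (dL + d)"
      using True mult_right_mono[of 1 phi "dL + d"] assms(2,4,5) by simp
    then have "dF \<le> phi / alpha * (dL + d)" using assms(3) by (simp add: field_simps)
    moreover have "alpha * dF / (phi - 1) \<le> (dL + d) / (phi - 1)"
      using True c by (intro divide_right_mono) auto
    moreover have "(dL + d) / (phi - 1) + (dL + d) = phi / (phi - 1) * (dL + d)"
      using c by (simp add: field_simps)
    ultimately show ?thesis using True IH step G' by (simp add: ff_invariant_def)
  qed
qed

lemma ff_invariant_flip_step:
  assumes inv: "ff_invariant phi alpha (False, dF, dL) X G"
    and "phi > 1" "alpha > 0" "0 \<le> G'"
  shows "ff_invariant phi alpha (dF + d > phi / alpha * dL, dF + d, dL) X G'"
proof (cases "dF + d > phi / alpha * dL")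
  case True
  then have "phi * dL / (phi - 1) \<le> alpha * (dF + d) / (phi - 1)"
    using assms(2,3) by (intro divide_right_mono) (auto simp: field_simps)
  with True inv assms(4) show ?thesis by (simp add: ff_invariant_def)
qed (use inv in \<open>simp add: ff_invariant_def\<close>)

lemma ff_state_invariant:
  assumes "K \<ge> 2" "phi > 1" "alpha > 0"
  shows "ff_invariant phi alpha (ff_state l K phi alpha t) (ff_flop_excess l K phi alpha t)
    (flop_mix_regret l K t (snd (snd (ff_state l K phi alpha t))))"
proof (induction t)
  case 0
  then show ?case by (simp add: ff_invariant_def ff_flop_excess_def)
next
  case (Suc t)
  obtain fl dF dL where st: "ff_state l K phi alpha t = (fl, dF, dL)"
    by (cases "ff_state l K phi alpha t")
  define d where "d = mix_gap l K (ff_rate K (fl, dF, dL)) (Suc t)"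
  have dL: "0 \<le> dL"
    using ff_flop_acc_nonneg[OF assms(1), of l phi alpha t] st by simp
  have d: "0 \<le> d"
    using ff_mix_gap_nonneg[OF assms(1), of "Suc t" l phi alpha] st by (simp add: d_def)
  show ?case
  proof (cases fl)
    case True
    have "ff_flop_excess l K phi alpha (Suc t) - flop_mix_regret l K (Suc t) (dL + d)
        \<le> ff_flop_excess l K phi alpha t - flop_mix_regret l K t dL"
      using mix_loss_flop_rate_le[OF assms(1) dL, of "dL + d" l dF t] d True
      by (simp add: ff_flop_excess_Suc[OF st])
    with True Suc.IH show ?thesis
      unfolding ff_state_Suc[OF st] st
      using ff_invariant_flop_step assms(2,3) dL d flop_mix_regret_bounds(2)[OF assms(1)]
      by (simp add: d_def)
  next
    case False
    with Suc.IH show ?thesis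
      unfolding ff_state_Suc[OF st] st
      using ff_invariant_flip_step assms(2,3) flop_mix_regret_bounds(1)[OF assms(1) dL]
      by (simp add: ff_flop_excess_Suc[OF st])
  qed
qed

lemma ff_flop_excess_le:
  assumes "K \<ge> 2" "phi > 1" "alpha > 0"
  shows "ff_flop_excess l K phi alpha T \<le> (phi / (phi - 1) + 1) * ff_Dflop l K phi alpha T"
proof -
  obtain fl dF dL where st: "ff_state l K phi alpha T = (fl, dF, dL)"
    by (cases "ff_state l K phi alpha T")
  have dL: "dL = ff_Dflop l K phi alpha T" "0 \<le> dL"
    using ff_state_accumulators[of l K phi alpha T] ff_flop_acc_nonneg[OF assms(1), of l phi alpha T] st
    by (simp_all add: ff_Dflop_def)
  have "flop_mix_regret l K T dL \<le> dL"
    using flop_mix_regret_bounds(2)[OF assms(1) dL(2)] .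
  with ff_state_invariant[OF assms, of l T] st dL show ?thesis
    by (cases fl) (auto simp: ff_invariant_def algebra_simps)
qed

lemma ff_flip_acc_le:
  assumes "K \<ge> 2" "phi > 1" "alpha > 0" "\<not> ff_in_flop l K phi alpha t"
  shows "fst (snd (ff_state l K phi alpha (t - 1)))
    \<le> phi / alpha * snd (snd (ff_state l K phi alpha (t - 1)))"
  using ff_state_invariant[OF assms(1-3), of l "t - 1"] assms(4)
  by (cases "ff_state l K phi alpha (t - 1)") (simp add: ff_invariant_def ff_in_flop_def)

lemma ff_regret_split:
  assumes "K \<ge> 1"
  shows "ff_loss l K phi alpha T - Lstar l K T
    = (\<Sum>s\<in>{1..T}. mix_gap l K (ff_eta l K phi alpha s) s) + ff_flop_excess l K phi alpha T"
proof -
  let ?y = "\<lambda>s. Lstar l K s - Lstar l K (s - 1)"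
  have "hedge_loss l K (ff_eta l K phi alpha s) s - ?y s = mix_gap l K (ff_eta l K phi alpha s) s
      + (if ff_in_flop l K phi alpha s then mix_loss l K (ff_eta l K phi alpha s) s - ?y s else 0)" for s
    using ff_eta_flip[of l K phi alpha s] by (simp add: mix_gap_def mix_loss_def)
  then have "(\<Sum>s\<in>{1..T}. hedge_loss l K (ff_eta l K phi alpha s) s - ?y s)
      = (\<Sum>s\<in>{1..T}. mix_gap l K (ff_eta l K phi alpha s) s) + ff_flop_excess l K phi alpha T"
    unfolding ff_flop_excess_def sum.inter_filter[OF finite_atLeastAtMost] by (simp only: sum.distrib)
  then show ?thesis
    using sum_Lstar_increments[of l K T] Lstar_0[OF assms]
    by (simp add: ff_loss_def sum_subtractf)
qed

lemma ff_Dflop_nonneg: "K \<ge> 2 \<Longrightarrow> 0 \<le> ff_Dflop l K phi alpha T"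
  unfolding ff_Dflop_def by (intro sum_nonneg ff_mix_gap_nonneg) auto

lemma ff_regret_le_last_flip:
  assumes "K \<ge> 2" "phi > 1" "alpha > 0"
    and t0: "t0 \<in> {1..T}" "\<not> ff_in_flop l K phi alpha t0" "\<forall>s\<in>{t0<..T}. ff_in_flop l K phi alpha s"
  shows "ff_loss l K phi alpha T - Lstar l K T - mix_gap l K (ff_eta l K phi alpha t0) t0
    \<le> (phi / (phi - 1) + phi / alpha + 2) * ff_Dflop l K phi alpha T"
proof -
  let ?fl = "ff_in_flop l K phi alpha" and ?d = "\<lambda>s. mix_gap l K (ff_eta l K phi alpha s) s"
  let ?D = "ff_Dflop l K phi alpha T"
  obtain dF dL where acc: "snd (ff_state l K phi alpha (t0 - 1)) = (dF, dL)"
    by (cases "snd (ff_state l K phi alpha (t0 - 1))")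
  have "{s\<in>{1..T}. \<not> ?fl s} = insert t0 {s\<in>{1..t0 - 1}. \<not> ?fl s}"
    using t0 by (auto simp: not_less_eq_eq)
  moreover have "(\<Sum>s\<in>insert t0 {s\<in>{1..t0 - 1}. \<not> ?fl s}. ?d s)
      = ?d t0 + (\<Sum>s\<in>{s\<in>{1..t0 - 1}. \<not> ?fl s}. ?d s)"
    by (rule sum.insert) (use t0(1) in auto)
  ultimately have flips: "(\<Sum>s\<in>{s\<in>{1..T}. \<not> ?fl s}. ?d s) = ?d t0 + dF"
    using ff_state_accumulators[of l K phi alpha "t0 - 1"] acc by simp
  have dF: "dF \<le> phi / alpha * dL"
    using ff_flip_acc_le[OF assms(1-3) t0(2)] acc by simp
  have "dL = (\<Sum>s\<in>{s\<in>{1..t0 - 1}. ?fl s}. ?d s)"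
    using ff_state_accumulators[of l K phi alpha "t0 - 1"] acc by simp
  also have "\<dots> \<le> ?D"
    unfolding ff_Dflop_def using t0(1) ff_mix_gap_nonneg[OF assms(1)] by (intro sum_mono2) auto
  finally have "dF \<le> phi / alpha * ?D"
    using assms(2,3) by (intro order.trans[OF dF mult_left_mono]) auto
  moreover have "ff_loss l K phi alpha T - Lstar l K T
      = (\<Sum>s\<in>{s\<in>{1..T}. \<not> ?fl s}. ?d s) + ?D + ff_flop_excess l K phi alpha T"
    using ff_regret_split[of K l phi alpha T] assms(1)
      sum_filter_split[of "{1..T}" ?d ?fl] by (simp add: ff_Dflop_def)
  ultimately show ?thesis
    using flips ff_flop_excess_le[OF assms(1-3), of l T] by (simp add: algebra_simps)
qed

section \<open>The variance in flop rounds\<close>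

lemma parabola_shift_le:
  fixes N a c :: real
  assumes "N \<ge> 2" "0 \<le> c" "c \<le> 1"
  shows "(a - c) - (a - c)\<^sup>2 / (N - 1) \<le> a * (N - a) / N"
proof -
  have pos: "N * (N - 1) > 0" using assms(1) by simp
  have "N * (N - 1) * (a * (N - a) / N - ((a - c) - (a - c)\<^sup>2 / (N - 1)))
      = (a - N * c)\<^sup>2 + N * (N - 1) * c * (1 - c)"
    using assms(1) by (simp add: field_simps power2_eq_square)
  also have "\<dots> \<ge> 0" using assms by (intro add_nonneg_nonneg mult_nonneg_nonneg) auto
  finally show ?thesis using pos by (simp add: zero_le_mult_iff)
qed

lemma parabola_le_excess:
  fixes N a x y :: real
  assumes "N \<ge> 2" "0 \<le> y" "y \<le> 1" "y \<le> a" "0 \<le> x" "a - 1 \<le> x"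
  shows "x - x\<^sup>2 / (N - 1) \<le> a * (N - a) / N + max 0 (x - a + y)"
proof (cases "a - y \<le> x")
  case True
  have "x - x\<^sup>2 / n - ((a - y) - (a - y)\<^sup>2 / n) = (x - (a - y)) * (1 - (x + (a - y)) / n)"
    if "n \<noteq> 0" for n :: real
    using that by (simp add: field_simps power2_eq_square)
  then have "x - x\<^sup>2 / (N - 1) - ((a - y) - (a - y)\<^sup>2 / (N - 1))
      = (x - (a - y)) * (1 - (x + (a - y)) / (N - 1))"
    using assms(1) by simp
  also have "\<dots> \<le> (x - (a - y)) * 1"
    using True assms by (intro mult_left_mono) (auto intro!: divide_nonneg_nonneg)
  finally show ?thesis
    using parabola_shift_le[OF assms(1-3), of a] by simp
next
  case False
  then show ?thesis
    using parabola_shift_le[OF assms(1), of "a - x" a] assms by simp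
qed

lemma sum_mul_one_minus_le:
  fixes h :: "'a \<Rightarrow> real" and a y :: real
  assumes "finite S" "\<And>s. s \<in> S \<Longrightarrow> 0 \<le> h s \<and> h s \<le> 1"
    and "0 \<le> y" "y \<le> 1" "y \<le> a" "a - 1 \<le> sum h S"
  shows "(\<Sum>s\<in>S. h s * (1 - h s))
    \<le> a * (card S + 1 - a) / (card S + 1) + max 0 (sum h S - a + y)"
proof (cases "S = {}")
  case True
  with assms(3-6) show ?thesis by (simp add: max_def mult_nonneg_nonneg)
next
  case False
  define N where "N = real (card S + 1)"
  have "card S \<ge> 1" using False assms(1) by (simp add: Suc_le_eq card_gt_0_iff)
  then have N: "N \<ge> 2" by (simp add: N_def)
  have "(sum h S)\<^sup>2 / (N - 1) \<le> (\<Sum>s\<in>S. (h s)\<^sup>2)"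
    using sum_squared_le_sum_of_squares[of h S] N by (simp add: N_def divide_le_eq)
  then have "(\<Sum>s\<in>S. h s * (1 - h s)) \<le> sum h S - (sum h S)\<^sup>2 / (N - 1)"
    by (simp add: algebra_simps sum_subtractf power2_eq_square)
  also have "\<dots> \<le> a * (N - a) / N + max 0 (sum h S - a + y)"
    using assms(2-6) by (intro parabola_le_excess N sum_nonneg) auto
  finally show ?thesis by (simp add: N_def)
qed

lemma ff_Vflop_le_sum_hedge_var:
  assumes "K \<ge> 1" "\<And>t k. t \<in> {1..T} \<Longrightarrow> k < K \<Longrightarrow> 0 \<le> l t k \<and> l t k \<le> 1"
    and "\<not> ff_in_flop l K phi alpha t0"
  shows "ff_Vflop l K phi alpha T \<le> (\<Sum>s\<in>{1..T} - {t0}.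
    hedge_loss l K (ff_eta l K phi alpha s) s * (1 - hedge_loss l K (ff_eta l K phi alpha s) s))"
  unfolding ff_Vflop_def
proof (rule order.trans[OF sum_mono sum_mono2])
  fix s assume "s \<in> {s\<in>{1..T}. ff_in_flop l K phi alpha s}"
  with hedge_loss_bounds[OF assms(1)] assms(2) show "loss_var l K (ff_eta l K phi alpha s) s
      \<le> hedge_loss l K (ff_eta l K phi alpha s) s * (1 - hedge_loss l K (ff_eta l K phi alpha s) s)"
    by simp
next
  fix s assume "s \<in> {1..T} - {t0} - {s\<in>{1..T}. ff_in_flop l K phi alpha s}"
  with hedge_loss_bounds[OF assms(1)] assms(2)
  show "0 \<le> hedge_loss l K (ff_eta l K phi alpha s) s * (1 - hedge_loss l K (ff_eta l K phi alpha s) s)"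
    by simp
qed (use assms(3) in auto)

lemma ff_Vflop_le_last_flip:
  assumes "K \<ge> 1" and lb: "\<And>t k. t \<in> {1..T} \<Longrightarrow> k < K \<Longrightarrow> 0 \<le> l t k \<and> l t k \<le> 1"
    and t0: "t0 \<in> {1..T}" "\<not> ff_in_flop l K phi alpha t0"
    and "ff_loss l K phi alpha T \<ge> Lstar l K T"
  shows "ff_Vflop l K phi alpha T \<le> Lstar l K T * (real T - Lstar l K T) / real T
    + max 0 (ff_loss l K phi alpha T - Lstar l K T - mix_gap l K (ff_eta l K phi alpha t0) t0)"
proof -
  let ?h = "\<lambda>s. hedge_loss l K (ff_eta l K phi alpha s) s"
  let ?y = "Lstar l K t0 - Lstar l K (t0 - 1)"
  have h: "0 \<le> ?h s \<and> ?h s \<le> 1" if "s \<in> {1..T}" for s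
    using hedge_loss_bounds[OF assms(1)] lb that by simp
  have split: "ff_loss l K phi alpha T = sum ?h ({1..T} - {t0}) + ?h t0"
    using sum.remove[of "{1..T}" t0 ?h] t0(1) by (simp add: ff_loss_def)
  have "Lstar l K (t0 - 1) \<le> Lstar l K t0" "Lstar l K t0 \<le> Lstar l K (t0 - 1) + 1"
    using Lstar_Suc_bounds[OF assms(1), of l "t0 - 1"] lb t0(1) by auto
  moreover have "0 \<le> Lstar l K (t0 - 1)" "Lstar l K t0 \<le> Lstar l K T"
    using Lstar_mono[OF assms(1) lb, where t=0 and t'="t0 - 1"] Lstar_mono[OF assms(1) lb, where t=t0 and t'=T]
      Lstar_0[OF assms(1)] t0(1) by auto
  ultimately have "(\<Sum>s\<in>{1..T} - {t0}. ?h s * (1 - ?h s))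
      \<le> Lstar l K T * (card ({1..T} - {t0}) + 1 - Lstar l K T) / (card ({1..T} - {t0}) + 1)
        + max 0 (sum ?h ({1..T} - {t0}) - Lstar l K T + ?y)"
    using h split h[OF t0(1)] assms(5) by (intro sum_mul_one_minus_le) auto
  also have "\<dots> = Lstar l K T * (real T - Lstar l K T) / real T
      + max 0 (ff_loss l K phi alpha T - Lstar l K T - mix_gap l K (ff_eta l K phi alpha t0) t0)"
  proof -
    have "real (card ({1..T} - {t0}) + 1) = real T" using t0(1) by simp
    moreover have "?h t0 - ?y = mix_gap l K (ff_eta l K phi alpha t0) t0"
      using ff_eta_flip[OF t0(2)] t0(1) by (simp add: mix_gap_def mix_loss_def)
    then have "sum ?h ({1..T} - {t0}) - Lstar l K T + ?y
        = ff_loss l K phi alpha T - Lstar l K T - mix_gap l K (ff_eta l K phi alpha t0) t0"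
      using split by linarith
    ultimately show ?thesis by (simp only:)
  qed
  finally have "(\<Sum>s\<in>{1..T} - {t0}. ?h s * (1 - ?h s))
      \<le> Lstar l K T * (real T - Lstar l K T) / real T
        + max 0 (ff_loss l K phi alpha T - Lstar l K T - mix_gap l K (ff_eta l K phi alpha t0) t0)" .
  moreover have "ff_Vflop l K phi alpha T \<le> (\<Sum>s\<in>{1..T} - {t0}. ?h s * (1 - ?h s))"
    using assms(1) lb t0(2) by (rule ff_Vflop_le_sum_hedge_var)
  ultimately show ?thesis by (rule order.trans[rotated])
qed

theorem lemma13:
  fixes l :: "nat \<Rightarrow> nat \<Rightarrow> real" and K T :: nat and phi alpha :: real
  assumes "K \<ge> 1" and "T \<ge> 1"
    and "\<And>t k. t \<in> {1..T} \<Longrightarrow> k < K \<Longrightarrow> 0 \<le> l t k \<and> l t k \<le> 1"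
    and "phi > 1" and "alpha > 0"
    and "ff_loss l K phi alpha T \<ge> Lstar l K T"
  shows "ff_Vflop l K phi alpha T
    \<le> Lstar l K T * (real T - Lstar l K T) / real T
       + (phi / (phi - 1) + phi / alpha + 2) * ff_Dflop l K phi alpha T + phi / alpha"
proof (cases "K = 1")
  case True
  have "0 \<le> Lstar l K T" "Lstar l K T \<le> real T"
    using Lstar_mono[OF assms(1,3), where t=0 and t'=T] Lstar_0[OF assms(1)]
      Lstar_le_of_nat[OF assms(1,3)] by auto
  moreover have "ff_Vflop l K phi alpha T = 0" "ff_Dflop l K phi alpha T = 0"
    using True ff_never_flop_single_expert by (simp_all add: ff_Vflop_def ff_Dflop_def)
  ultimately show ?thesis using assms(4,5) by simp
next
  case False
  then have K: "K \<ge> 2" using assms(1) by simp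
  obtain t0 where t0: "t0 \<in> {1..T}" "\<not> ff_in_flop l K phi alpha t0"
    "\<forall>s\<in>{t0<..T}. ff_in_flop l K phi alpha s"
    using ff_last_flip_round[OF assms(2)] .
  let ?R = "ff_loss l K phi alpha T - Lstar l K T - mix_gap l K (ff_eta l K phi alpha t0) t0"
  let ?C = "phi / (phi - 1) + phi / alpha + 2"
  have "?R \<le> ?C * ff_Dflop l K phi alpha T"
    using ff_regret_le_last_flip[OF K assms(4,5) t0] .
  moreover have "0 \<le> ?C * ff_Dflop l K phi alpha T"
    using assms(4,5) ff_Dflop_nonneg[OF K] by simp
  ultimately have "max 0 ?R \<le> ?C * ff_Dflop l K phi alpha T" by simp
  have "ff_Vflop l K phi alpha T \<le> Lstar l K T * (real T - Lstar l K T) / real T + max 0 ?R"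
    using ff_Vflop_le_last_flip[OF assms(1,3) t0(1,2) assms(6)] .
  also have "\<dots> \<le> Lstar l K T * (real T - Lstar l K T) / real T + ?C * ff_Dflop l K phi alpha T"
    using \<open>max 0 ?R \<le> _\<close> by (rule add_left_mono)
  also have "\<dots> \<le> Lstar l K T * (real T - Lstar l K T) / real T + ?C * ff_Dflop l K phi alpha T
      + phi / alpha"
    using assms(4,5) by simp
  finally show ?thesis .
qed

end
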